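(* Let $q$ be a prime, $m\geq 3$, and let $D'$ be an abelian group of order $q^{m+1}$. Suppose that: (1) $D'$ contains at least two subgroups of order $q^{m-1}$ and one of them, say $A'$, is cyclic; (2) $A'$ contains a subgroup $A_1'$ of order $q$ such that $D'/A_1'\cong C_q\times C_{q^{m-1}}$. Then $D'$ is isomorphic to $C_q\times C_{q^m}$ or to $C_{q^2}\times C_{q^{m-1}}$. Moreover, if $m\geq 4$, or if $D'$ contains a noncyclic subgroup $W'$ of order $q^2$ such that $|W'\cap A'|=q$ and $D'/W'$ is cyclic, then $D'\cong C_q\times C_{q^m}$.
   Context: $C_n$ denotes the cyclic group of order $n$. *)

theory Defs
  imports "HOL-Algebra.Algebra"
begin

abbreviation C :: "nat \<Rightarrow> int monoid" where
  "C n \<equiv> integer_mod_group n"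

end

(*
  Write A = <a> with ord a = q^n, where n = m - 1; then A1 consists of the elements of A
  of order dividing q. Since D/A1 is C_q x C_(q^n), every x^(q^n) lies in A1, so D has
  exponent dividing q^(n+1), while some x0 has x0^(q^(n-1)) outside A1.

  If some g has g^(q^n) <> 1, then ord g = q^(n+1) and <g> has index q. A representative h
  of a nontrivial coset satisfies h^q = g^(q t), so h g^(-t) has order q and meets <g>
  trivially: D = C_q x C_(q^(n+1)).

  Otherwise D has exponent q^n. Since A has index q^2, x0^(q^2) lies in A while
  x0^(q^(n-1)) does not, which forces n = 2; correcting x0 by a power of a in the same way
  gives y of order q^2 with <y> and A independent, so D = C_(q^2) x C_(q^2). There only
  q^2 elements have order dividing q, so a noncyclic W of order q^2 consists of exactly
  these elements and contains every q-th power; thus D/W has exponent q and order q^2 and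
  is not cyclic.
*)
theory Submission
  imports Defs
begin

section \<open>Cyclic subgroups and element orders\<close>

lemma DirProd_nat_pow: "pow (G \<times>\<times> H) (x, y) (n::nat) = (pow G x n, pow H y n)"
  by (induction n) auto

lemma (in group) pow_card_subgroup_eq_one:
  assumes "subgroup H G" "y \<in> H"
  shows "y [^] card H = \<one>"
proof -
  interpret H: group "subgroup_generated G H" by (rule group_subgroup_generated)
  have "carrier (subgroup_generated G H) = H"
    using assms(1) by (rule subgroup.carrier_subgroup_generated_subgroup)
  then show ?thesis
    using H.pow_order_eq_1[of y] assms(2) by (simp add: order_def pow_subgroup_generated)
qed

lemma (in group) subgroup_nat_pow_closed:
  assumes "subgroup H G" "x \<in> H"
  shows "x [^] (k::nat) \<in> H"
  using subgroup_int_pow_closed[OF assms, of "int k"] by (simp add: int_pow_int)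

lemma (in group) ord_eq_prime_power:
  assumes "Factorial_Ring.prime q" "x \<in> carrier G"
    and "x [^] (q ^ Suc k) = \<one>" "x [^] (q ^ k) \<noteq> \<one>"
  shows "ord x = q ^ Suc k"
proof -
  obtain i where i: "i \<le> Suc k" "ord x = q ^ i"
    using divides_primepow_nat[OF assms(1)] assms(2,3) pow_eq_id by blast
  have "\<not> i \<le> k"
    using assms(2,4) i(2) le_imp_power_dvd pow_eq_id by metis
  then have "i = Suc k" using i(1) by simp
  then show ?thesis using i(2) by simp
qed

lemma (in group) subgroup_generated_carrier_subgroup_generated:
  "subgroup_generated G (carrier (subgroup_generated G S)) = subgroup_generated G S"
proof -
  have "carrier (subgroup_generated G (carrier (subgroup_generated G S)))
      = carrier (subgroup_generated G S)"
    by (rule subgroup.carrier_subgroup_generated_subgroup[OF subgroup_subgroup_generated])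
  then show ?thesis by (simp add: subgroup_generated_def)
qed

lemma (in group) cyclic_subgroup_generatedE:
  assumes "subgroup A G" "cyclic_group (subgroup_generated G A)"
  obtains a where "a \<in> carrier G" "carrier (subgroup_generated G {a}) = A"
proof -
  have carrier_A: "carrier (subgroup_generated G A) = A"
    using assms(1) by (rule subgroup.carrier_subgroup_generated_subgroup)
  obtain a where a: "a \<in> carrier (subgroup_generated G A)"
    "carrier (subgroup_generated G A) = range (\<lambda>k::int. a [^]\<^bsub>subgroup_generated G A\<^esub> k)"
    using assms(2) group.cyclic_group[OF group_subgroup_generated] by blast
  have a_carrier: "a \<in> carrier G"
    using subgroup.mem_carrier[OF assms(1)] a(1) carrier_A by simp
  have "carrier (subgroup_generated G {a}) = range (\<lambda>k::int. a [^] k)"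
    using carrier_subgroup_generated_by_singleton[OF a_carrier] .
  also have "\<dots> = range (\<lambda>k::int. a [^]\<^bsub>subgroup_generated G A\<^esub> k)"
    using int_pow_subgroup_generated[OF a(1)] by simp
  also have "\<dots> = A" using a(2) carrier_A by simp
  finally show thesis using that a_carrier by blast
qed

lemma (in group) cyclic_group_subgroup_generated_of_ord_eq_card:
  assumes "subgroup W G" "finite W" "w \<in> W" "ord w = card W"
  shows "cyclic_group (subgroup_generated G W)"
proof -
  have w: "w \<in> carrier G" using subgroup.mem_carrier[OF assms(1,3)] .
  have "carrier (subgroup_generated G {w}) \<subseteq> W"
    using subgroup_generated_minimal[OF assms(1)] assms(3) by simp
  moreover have "card (carrier (subgroup_generated G {w})) = card W"
    using cyclic_order_is_ord[OF w] assms(4) by (simp add: order_def)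
  ultimately have "carrier (subgroup_generated G {w}) = W"
    by (rule card_subset_eq[OF assms(2)])
  then have "subgroup_generated G W = subgroup_generated G {w}"
    using subgroup_generated_carrier_subgroup_generated[of "{w}"] by simp
  then show ?thesis by (simp add: cyclic_group_generated)
qed

lemma (in group) order_dvd_exponent_cyclic:
  assumes "cyclic_group G" "\<And>x. x \<in> carrier G \<Longrightarrow> x [^] k = \<one>"
  shows "order G dvd k"
proof -
  obtain z where z: "z \<in> carrier G" "subgroup_generated G {z} = G"
    using assms(1) unfolding cyclic_group_def by blast
  have "ord z = order G" using cyclic_order_is_ord[OF z(1)] by (simp only: z(2))
  then show ?thesis using assms(2)[OF z(1)] pow_eq_id[OF z(1)] by simp
qed

lemma (in group) integer_mod_group_iso_subgroup_generated:
  assumes x: "x \<in> carrier G" and ord: "0 < ord x"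
  shows "C (ord x) \<cong> subgroup_generated G {x}"
proof -
  let ?f = "\<lambda>k::int. x [^] k" and ?n = "int (ord x)"
  have eq: "x [^] i = x [^] j \<longleftrightarrow> ?n dvd j - i" for i j :: int
    using int_pow_eq[OF x] .
  have carrier_gen: "carrier (subgroup_generated G {x}) = range ?f"
    using carrier_subgroup_generated_by_singleton[OF x] .
  have hom: "?f \<in> hom (C (ord x)) (subgroup_generated G {x})"
  proof (rule homI)
    fix i j :: int
    have "x [^] ((i + j) mod ?n) = x [^] (i + j)"
      using eq by (simp add: mod_eq_dvd_iff dvd_diff_commute)
    then show "?f (i \<otimes>\<^bsub>C (ord x)\<^esub> j) = ?f i \<otimes>\<^bsub>subgroup_generated G {x}\<^esub> ?f j"
      by (simp add: int_pow_mult[OF x] subgroup_generated_def)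
  qed (use carrier_gen in auto)
  have "bij_betw ?f {0..<?n} (range ?f)"
  proof (rule bij_betw_imageI)
    show "inj_on ?f {0..<?n}"
    proof (rule inj_onI)
      fix i j assume ij: "i \<in> {0..<?n}" "j \<in> {0..<?n}" "?f i = ?f j"
      then have "?n dvd j - i" using eq by blast
      then have "j mod ?n = i mod ?n" by (simp only: mod_eq_dvd_iff)
      then show "i = j" using ij(1,2) by simp
    qed
    have "?f k = ?f (k mod ?n)" for k
      using eq by (metis mod_eq_dvd_iff mod_mod_trivial)
    moreover have "k mod ?n \<in> {0..<?n}" for k using ord by simp
    ultimately show "?f ` {0..<?n} = range ?f" by blast
  qed
  then show ?thesis
    using hom ord carrier_gen
    by (auto simp: is_iso_def iso_def carrier_integer_mod_group)
qed

lemma (in comm_group) set_mult_cyclic_eq_carrier: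
  assumes "finite (carrier G)" "x \<in> carrier G" "y \<in> carrier G"
    and "ord x * ord y = order G"
    and "carrier (subgroup_generated G {x}) \<inter> carrier (subgroup_generated G {y}) \<subseteq> {\<one>}"
  shows "carrier (subgroup_generated G {x}) <#> carrier (subgroup_generated G {y}) = carrier G"
proof -
  let ?X = "carrier (subgroup_generated G {x})" and ?Y = "carrier (subgroup_generated G {y})"
  interpret XY: group_disjoint_sum G ?X ?Y
    by (simp add: group_disjoint_sum_def is_group subgroup_subgroup_generated)
  have "inj_on (\<lambda>(u, v). u \<otimes> v) (?X \<times> ?Y)"
    using assms(5) XY.cancel by (auto simp: inj_on_def)
  moreover have "?X <#> ?Y = (\<lambda>(u, v). u \<otimes> v) ` (?X \<times> ?Y)"
    by (auto simp: set_mult_def)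
  ultimately have "card (?X <#> ?Y) = card ?X * card ?Y"
    by (simp add: card_image card_cartesian_product)
  also have "\<dots> = order G"
    using cyclic_order_is_ord assms(2,3,4) by (simp add: order_def)
  finally have "card (?X <#> ?Y) = card (carrier G)" by (simp add: order_def)
  with setmult_subset_G[OF XY.AG.subset XY.BG.subset] show ?thesis
    by (rule card_subset_eq[OF assms(1)])
qed

lemma (in comm_group) iso_DirProd_integer_mod_group_ord:
  assumes "finite (carrier G)" "x \<in> carrier G" "y \<in> carrier G"
    and "ord x * ord y = order G"
    and "carrier (subgroup_generated G {x}) \<inter> carrier (subgroup_generated G {y}) \<subseteq> {\<one>}"
  shows "G \<cong> C (ord x) \<times>\<times> C (ord y)"
proof -
  let ?X = "carrier (subgroup_generated G {x})" and ?Y = "carrier (subgroup_generated G {y})"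
  interpret XY: group_disjoint_sum G ?X ?Y
    by (simp add: group_disjoint_sum_def is_group subgroup_subgroup_generated)
  have "(\<lambda>(u, v). u \<otimes> v) \<in> iso (subgroup_generated G ?X \<times>\<times> subgroup_generated G ?Y) G"
    using XY.iso_group_mul[OF comm_group_axioms] set_mult_cyclic_eq_carrier[OF assms] assms(5)
    by simp
  then have "subgroup_generated G {x} \<times>\<times> subgroup_generated G {y} \<cong> G"
    unfolding subgroup_generated_carrier_subgroup_generated is_iso_def by blast
  moreover have "C (ord x) \<times>\<times> C (ord y) \<cong> subgroup_generated G {x} \<times>\<times> subgroup_generated G {y}"
    using ord_ge_1[OF assms(1)] assms(2,3)
    by (intro group.DirProd_iso_trans integer_mod_group_iso_subgroup_generated)
      (simp_all add: Suc_le_eq)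
  ultimately show ?thesis
    by (meson DirProd_group group.iso_sym group_integer_mod_group iso_trans)
qed

lemma (in group) card_pow_eq_one_cyclic_le:
  assumes x: "x \<in> carrier G" and "q dvd ord x" "0 < q"
  shows "card {u \<in> carrier (subgroup_generated G {x}). u [^] q = \<one>} \<le> q"
proof -
  obtain r where r: "ord x = r * q" using assms(2) by (metis dvdE mult.commute)
  have "{u \<in> carrier (subgroup_generated G {x}). u [^] q = \<one>} \<subseteq> (\<lambda>j. x [^] (r * j)) ` {..<q}"
  proof clarify
    fix u assume u: "u \<in> carrier (subgroup_generated G {x})" "u [^] q = \<one>"
    obtain k :: int where k: "u = x [^] k"
      using u(1) carrier_subgroup_generated_by_singleton[OF x] by auto
    have "u [^] int q = \<one>" using u(2) by (simp add: int_pow_int)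
    then have "x [^] (k * int q) = \<one>" using k int_pow_pow[OF x] by simp
    then have "int r dvd k" using int_pow_eq_id[OF x] r assms(3) by simp
    then obtain t where t: "k = int r * t" by blast
    define j where "j = nat (t mod int q)"
    have j: "j < q" "int j = t mod int q" using assms(3) by (auto simp: j_def nat_less_iff)
    have "int q dvd int j - t" using j(2) by (metis mod_eq_dvd_iff mod_mod_trivial)
    then have "int (ord x) dvd int r * (int j - t)" using r by simp
    then have "int (ord x) dvd int (r * j) - k" using t by (simp add: right_diff_distrib)
    then have "u = x [^] int (r * j)" using k int_pow_eq[OF x] by blast
    then have "u = x [^] (r * j)" using int_pow_int[of G x "r * j"] by (rule trans)
    then show "u \<in> (\<lambda>j. x [^] (r * j)) ` {..<q}" using j(1) by blast
  qed
  then have "card {u \<in> carrier (subgroup_generated G {x}). u [^] q = \<one>}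
      \<le> card ((\<lambda>j. x [^] (r * j)) ` {..<q})"
    by (intro card_mono finite_imageI finite_lessThan)
  also have "\<dots> \<le> q" using card_image_le[of "{..<q}"] by simp
  finally show ?thesis .
qed

lemma (in group) subgroup_of_cyclic_eq_pow_eq_one:
  assumes "finite (carrier G)" "x \<in> carrier G" "subgroup H G"
    and "H \<subseteq> carrier (subgroup_generated G {x})" "card H = q" "q dvd ord x" "0 < q"
  shows "H = {u \<in> carrier (subgroup_generated G {x}). u [^] q = \<one>}"
proof (rule card_seteq)
  show "finite {u \<in> carrier (subgroup_generated G {x}). u [^] q = \<one>}"
    using finite_subset[OF carrier_subgroup_generated_subset assms(1)] by simp
  show "H \<subseteq> {u \<in> carrier (subgroup_generated G {x}). u [^] q = \<one>}"
    using pow_card_subgroup_eq_one[OF assms(3)] assms(4,5) by auto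
  show "card {u \<in> carrier (subgroup_generated G {x}). u [^] q = \<one>} \<le> card H"
    using card_pow_eq_one_cyclic_le assms(2,5-7) by simp
qed

section \<open>Powers in quotient groups\<close>

lemma (in normal) FactGroup_pow_eq_one_iff:
  assumes "x \<in> carrier G"
  shows "(H #> x) [^]\<^bsub>G Mod H\<^esub> (k::nat) = \<one>\<^bsub>G Mod H\<^esub> \<longleftrightarrow> x [^] k \<in> H"
proof -
  have xk: "x [^] k \<in> carrier G" using assms by simp
  have "(H #> x) [^]\<^bsub>G Mod H\<^esub> k = \<one>\<^bsub>G Mod H\<^esub> \<longleftrightarrow> H #> (x [^] k) = H"
    using FactGroup_pow[OF assms] by simp
  also have "\<dots> \<longleftrightarrow> x [^] k \<in> H"
    using coset_join1[OF _ xk subgroup_axioms] coset_join2[OF xk subgroup_axioms] by blast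
  finally show ?thesis .
qed

lemma (in normal) pow_card_rcosets_mem:
  assumes "x \<in> carrier G"
  shows "x [^] card (rcosets H) \<in> H"
proof -
  interpret Mod: group "G Mod H" by (rule factorgroup_is_group)
  have "H #> x \<in> carrier (G Mod H)" using assms by (auto simp: carrier_FactGroup)
  then have "(H #> x) [^]\<^bsub>G Mod H\<^esub> order (G Mod H) = \<one>\<^bsub>G Mod H\<^esub>"
    by (rule Mod.pow_order_eq_1)
  then show ?thesis
    using FactGroup_pow_eq_one_iff[OF assms] by (simp add: order_def FactGroup_def)
qed

lemma (in normal) pow_mem_iff_Mod_iso:
  assumes "\<phi> \<in> iso (G Mod H) K" "group K" "x \<in> carrier G"
  shows "x [^] (k::nat) \<in> H \<longleftrightarrow> \<phi> (H #> x) [^]\<^bsub>K\<^esub> k = \<one>\<^bsub>K\<^esub>"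
proof -
  interpret Mod: group "G Mod H" by (rule factorgroup_is_group)
  interpret \<phi>: group_hom "G Mod H" K \<phi>
    using assms(1,2) by (simp add: group_hom_def group_hom_axioms_def iso_def Mod.is_group)
  have Hx: "H #> x \<in> carrier (G Mod H)" using assms(3) by (auto simp: carrier_FactGroup)
  have inj: "inj_on \<phi> (carrier (G Mod H))" using assms(1) by (simp add: iso_def bij_betw_def)
  have "x [^] k \<in> H \<longleftrightarrow> (H #> x) [^]\<^bsub>G Mod H\<^esub> k = \<one>\<^bsub>G Mod H\<^esub>"
    using FactGroup_pow_eq_one_iff[OF assms(3)] by simp
  also have "\<dots> \<longleftrightarrow> \<phi> ((H #> x) [^]\<^bsub>G Mod H\<^esub> k) = \<phi> \<one>\<^bsub>G Mod H\<^esub>"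
    using Hx Mod.one_closed by (intro inj_on_eq_iff[OF inj, symmetric]) simp_all
  also have "\<dots> \<longleftrightarrow> \<phi> (H #> x) [^]\<^bsub>K\<^esub> k = \<one>\<^bsub>K\<^esub>"
    using \<phi>.hom_nat_pow[OF Hx] \<phi>.hom_one by simp
  finally show ?thesis .
qed

lemma (in normal) pow_mem_of_Mod_iso_DirProd:
  assumes "G Mod H \<cong> C r \<times>\<times> C s" "r dvd s" "x \<in> carrier G"
  shows "x [^] s \<in> H"
proof -
  obtain \<phi> where \<phi>: "\<phi> \<in> iso (G Mod H) (C r \<times>\<times> C s)"
    using assms(1) by (auto simp: is_iso_def)
  obtain u v where "\<phi> (H #> x) = (u, v)" by fastforce
  moreover have "int s * u mod int r = 0" using assms(2) by simp
  ultimately show ?thesis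
    using pow_mem_iff_Mod_iso[OF \<phi> DirProd_group assms(3)] by (simp add: DirProd_nat_pow)
qed

lemma (in normal) exists_pow_notin_of_Mod_iso_DirProd:
  assumes "G Mod H \<cong> C r \<times>\<times> C s" "0 < k" "k < s"
  obtains x where "x \<in> carrier G" "x [^] k \<notin> H"
proof -
  obtain \<phi> where \<phi>: "\<phi> \<in> iso (G Mod H) (C r \<times>\<times> C s)"
    using assms(1) by (auto simp: is_iso_def)
  have "(0, 1) \<in> carrier (C r \<times>\<times> C s)"
    using assms(2,3) by (simp add: carrier_integer_mod_group)
  moreover have "\<phi> ` carrier (G Mod H) = carrier (C r \<times>\<times> C s)"
    using \<phi> unfolding iso_def bij_betw_def by blast
  ultimately obtain xH where "xH \<in> carrier (G Mod H)" "\<phi> xH = (0, 1)"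
    by (metis imageE)
  then obtain x where x: "x \<in> carrier G" "\<phi> (H #> x) = (0, 1)"
    by (auto simp: carrier_FactGroup)
  have "int k mod int s \<noteq> 0" using assms(2,3) by simp
  then have "x [^] k \<notin> H"
    using pow_mem_iff_Mod_iso[OF \<phi> DirProd_group x(1)] x(2) by (simp add: DirProd_nat_pow)
  then show thesis using that x(1) by blast
qed

section \<open>Splitting off a cyclic factor\<close>

lemma (in group) pow_gcd_ord_mem:
  assumes x: "x \<in> carrier G" and "subgroup K G" "x [^] i \<in> K"
  shows "x [^] gcd i (int (ord x)) \<in> K"
proof -
  obtain u v where uv: "u * i + v * int (ord x) = gcd i (int (ord x))"
    using bezout_int by blast
  have "x [^] gcd i (int (ord x)) = (x [^] i) [^] u \<otimes> (x [^] int (ord x)) [^] v"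
    using uv x by (simp flip: int_pow_mult add: int_pow_pow mult.commute)
  also have "x [^] int (ord x) = \<one>" using x by (simp add: int_pow_int)
  finally show ?thesis
    using subgroup_int_pow_closed[OF assms(2,3)] x by simp
qed

lemma (in group) cyclic_Int_subgroup_trivial:
  assumes q: "Factorial_Ring.prime q" and x: "x \<in> carrier G" and ord: "ord x = q ^ Suc e"
    and K: "subgroup K G" and notin: "x [^] (q ^ e) \<notin> K"
  shows "carrier (subgroup_generated G {x}) \<inter> K \<subseteq> {\<one>}"
proof
  fix y assume y: "y \<in> carrier (subgroup_generated G {x}) \<inter> K"
  then obtain i :: int where i: "y = x [^] i"
    using carrier_subgroup_generated_by_singleton[OF x] by auto
  define d where "d = gcd i (int (q ^ Suc e))"
  have xd: "x [^] d \<in> K" using pow_gcd_ord_mem[OF x K] y i ord by (simp add: d_def)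
  have "nat d dvd q ^ Suc e"
    by (metis d_def gcd_dvd2 gcd_ge_0_int int_nat_eq int_dvd_int_iff)
  then obtain j where j: "j \<le> Suc e" "nat d = q ^ j"
    using divides_primepow_nat[OF q] by blast
  show "y \<in> {\<one>}"
  proof (cases "j = Suc e")
    case True
    then have "int (ord x) dvd i"
      using j(2) ord by (metis d_def gcd_dvd1 gcd_ge_0_int int_nat_eq)
    then show ?thesis using i int_pow_eq_id[OF x] by simp
  next
    case False
    then obtain c where c: "q ^ e = nat d * c"
      using j by (metis le_SucE le_imp_power_dvd dvdE)
    have "0 \<le> d" by (simp add: d_def)
    then have exponent: "int (q ^ e) = d * int c" using c by simp
    have "x [^] (q ^ e) = x [^] int (q ^ e)" by (rule int_pow_int[symmetric])
    also have "\<dots> = (x [^] d) [^] int c"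
      by (simp only: exponent int_pow_pow[OF x])
    finally show ?thesis using subgroup_int_pow_closed[OF K xd] notin by simp
  qed
qed

lemma (in group) dvd_of_pow_eq_int_pow:
  assumes x: "x \<in> carrier G" and g: "g \<in> carrier G" and "0 < ord g"
    and "s dvd ord g" "x [^] ord g = \<one>" "x [^] s = g [^] k"
  shows "int s dvd k"
proof -
  obtain r where r: "ord g = s * r" using assms(4) by blast
  have "g [^] (k * int r) = (x [^] s) [^] r"
    using assms(6) by (simp add: int_pow_pow[OF g] flip: int_pow_int)
  also have "\<dots> = \<one>" using assms(5) r x by (simp add: nat_pow_pow)
  finally have "int s * int r dvd k * int r" using int_pow_eq_id[OF g] r by simp
  moreover have "r \<noteq> 0" using r assms(3) by auto
  ultimately show ?thesis by simp
qed

lemma (in comm_group) exists_cyclic_complement: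
  assumes fin: "finite (carrier G)" and q: "Factorial_Ring.prime q"
    and g: "g \<in> carrier G" and x: "x \<in> carrier G"
    and "q ^ Suc e dvd ord g" "x [^] ord g = \<one>"
    and mem: "x [^] (q ^ Suc e) \<in> carrier (subgroup_generated G {g})"
    and notin: "x [^] (q ^ e) \<notin> carrier (subgroup_generated G {g})"
  obtains y where "y \<in> carrier G" "ord y = q ^ Suc e"
    "carrier (subgroup_generated G {y}) \<inter> carrier (subgroup_generated G {g}) \<subseteq> {\<one>}"
proof -
  let ?s = "q ^ Suc e" and ?gen = "carrier (subgroup_generated G {g})"
  obtain k :: int where k: "x [^] ?s = g [^] k"
    using mem carrier_subgroup_generated_by_singleton[OF g] by auto
  have "int ?s dvd k"
    using dvd_of_pow_eq_int_pow[OF x g _ assms(5,6) k] ord_ge_1[OF fin g] by simp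
  then obtain t where t: "k = int ?s * t" by blast
  define y where "y = x \<otimes> inv (g [^] t)"
  have y: "y \<in> carrier G" using x g by (simp add: y_def)
  have y_pow: "y [^] n = x [^] n \<otimes> inv (g [^] (t * int n))" for n :: nat
  proof -
    have "(g [^] t) [^] n = g [^] (t * int n)"
      using int_pow_pow[OF g, of t "int n"] by (simp add: int_pow_int)
    then show ?thesis using x g by (simp add: y_def pow_mult_distrib m_comm nat_pow_inv)
  qed
  have "y [^] ?s = \<one>" using y_pow[of ?s] k t g by (simp add: mult.commute)
  moreover have "y [^] (q ^ e) \<notin> ?gen"
  proof
    assume "y [^] (q ^ e) \<in> ?gen"
    moreover have "g [^] (t * int (q ^ e)) \<in> ?gen"
      using carrier_subgroup_generated_by_singleton[OF g] by auto
    ultimately have "y [^] (q ^ e) \<otimes> g [^] (t * int (q ^ e)) \<in> ?gen"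
      by (simp add: subgroup.m_closed subgroup_subgroup_generated)
    also have "y [^] (q ^ e) \<otimes> g [^] (t * int (q ^ e)) = x [^] (q ^ e)"
      using y_pow x g by (simp add: m_assoc)
    finally show False using notin by simp
  qed
  then have "y [^] (q ^ e) \<noteq> \<one>"
    using subgroup.one_closed[OF subgroup_subgroup_generated] by metis
  ultimately have ord_y: "ord y = ?s" by (rule ord_eq_prime_power[OF q y])
  show thesis
    using that y ord_y cyclic_Int_subgroup_trivial[OF q y ord_y subgroup_subgroup_generated]
      \<open>y [^] (q ^ e) \<notin> ?gen\<close> by blast
qed

lemma (in comm_group) iso_DirProd_prime_of_index:
  assumes fin: "finite (carrier G)" and q: "Factorial_Ring.prime q" and g: "g \<in> carrier G"
    and order: "order G = q * ord g" and "q dvd ord g"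
    and exponent: "\<And>x. x \<in> carrier G \<Longrightarrow> x [^] ord g = \<one>"
  shows "G \<cong> C q \<times>\<times> C (ord g)"
proof -
  let ?gen = "carrier (subgroup_generated G {g})"
  have sub: "subgroup ?gen G" by (rule subgroup_subgroup_generated)
  have card: "card ?gen = ord g" using cyclic_order_is_ord[OF g] by (simp add: order_def)
  have ord_pos: "0 < ord g" using ord_ge_1[OF fin g] by simp
  have "card (rcosets ?gen) * ord g = q * ord g" using lagrange[OF sub] card order by simp
  then have index: "card (rcosets ?gen) = q" using ord_pos by simp
  have "?gen \<noteq> carrier G"
    using card order ord_pos prime_gt_1_nat[OF q] by (auto simp: order_def)
  then obtain h where h: "h \<in> carrier G" "h \<notin> ?gen"
    using subgroup.subset[OF sub] by blast
  have mem: "h [^] (q ^ Suc 0) \<in> ?gen"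
    using normal.pow_card_rcosets_mem[OF subgroup_imp_normal[OF sub] h(1)] index by simp
  have dvd: "q ^ Suc 0 dvd ord g" and notin: "h [^] (q ^ 0) \<notin> ?gen"
    using assms(5) h by simp_all
  obtain y where y: "y \<in> carrier G" "ord y = q ^ Suc 0"
      "carrier (subgroup_generated G {y}) \<inter> ?gen \<subseteq> {\<one>}"
    by (rule exists_cyclic_complement[OF fin q g h(1) dvd exponent[OF h(1)] mem notin])
  have "G \<cong> C (ord y) \<times>\<times> C (ord g)"
    using iso_DirProd_integer_mod_group_ord[OF fin y(1) g _ y(3)] y(2) order by simp
  then show ?thesis using y(2) by simp
qed

lemma (in comm_group) iso_DirProd_prime_of_exponent:
  assumes "finite (carrier G)" "Factorial_Ring.prime q" "order G = q * q ^ Suc n"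
    and "\<And>x. x \<in> carrier G \<Longrightarrow> x [^] (q ^ Suc n) = \<one>"
    and "g \<in> carrier G" "g [^] (q ^ n) \<noteq> \<one>"
  shows "G \<cong> C q \<times>\<times> C (q ^ Suc n)"
proof -
  have "ord g = q ^ Suc n"
    by (rule ord_eq_prime_power[OF assms(2,5) assms(4)[OF assms(5)] assms(6)])
  then show ?thesis using iso_DirProd_prime_of_index[OF assms(1,2,5)] assms(3,4) by simp
qed

lemma (in comm_group) card_pow_eq_one_set_mult_le:
  fixes q :: nat
  assumes fin: "finite (carrier G)" and H: "subgroup H G" and K: "subgroup K G"
    and "H \<inter> K \<subseteq> {\<one>}" "H <#> K = carrier G"
  shows "card {g \<in> carrier G. g [^] q = \<one>}
    \<le> card {h \<in> H. h [^] q = \<one>} * card {k \<in> K. k [^] q = \<one>}"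
proof -
  let ?H = "{h \<in> H. h [^] q = \<one>}" and ?K = "{k \<in> K. k [^] q = \<one>}"
  have "{g \<in> carrier G. g [^] q = \<one>} \<subseteq> (\<lambda>(u, v). u \<otimes> v) ` (?H \<times> ?K)"
  proof clarify
    fix g assume g: "g \<in> carrier G" "g [^] q = \<one>"
    then obtain u v where uv: "u \<in> H" "v \<in> K" "g = u \<otimes> v"
      using assms(5) unfolding set_mult_def by blast
    have carrier: "u \<in> carrier G" "v \<in> carrier G"
      using subgroup.mem_carrier[OF H uv(1)] subgroup.mem_carrier[OF K uv(2)] by simp_all
    have "u [^] q \<otimes> v [^] q = (u \<otimes> v) [^] q"
      by (rule pow_mult_distrib[OF m_comm[OF carrier] carrier, symmetric])
    also have "\<dots> = \<one>" using g(2) uv(3) by simp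
    finally have "u [^] q \<otimes> v [^] q = \<one>" .
    then have "u [^] q = inv (v [^] q)" using carrier by (simp add: inv_equality)
    moreover have "u [^] q \<in> H" "inv (v [^] q) \<in> K"
      using uv H K by (simp_all add: subgroup.m_inv_closed subgroup_nat_pow_closed)
    ultimately have "u [^] q = \<one>" using assms(4) by auto
    moreover then have "v [^] q = \<one>"
      using \<open>u [^] q = inv (v [^] q)\<close> carrier by (metis inv_eq_1_iff nat_pow_closed)
    ultimately show "g \<in> (\<lambda>(u, v). u \<otimes> v) ` (?H \<times> ?K)" using uv by force
  qed
  moreover have "finite (?H \<times> ?K)"
    using finite_subset[OF subgroup.subset[OF H] fin] finite_subset[OF subgroup.subset[OF K] fin]
    by simp
  ultimately have "card {g \<in> carrier G. g [^] q = \<one>} \<le> card (?H \<times> ?K)"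
    by (meson card_image_le card_mono finite_imageI le_trans)
  then show ?thesis by (simp add: card_cartesian_product)
qed

section \<open>Abelian groups of order q^(n+2) with a cyclic subgroup of order q^n\<close>

lemma (in comm_group) not_cyclic_Mod_of_not_cyclic_subgroup:
  fixes q :: nat
  assumes q: "Factorial_Ring.prime q" and order: "order G = q ^ 2 * q ^ 2"
    and exponent: "\<And>g. g \<in> carrier G \<Longrightarrow> g [^] (q ^ 2) = \<one>"
    and card_Omega: "card {g \<in> carrier G. g [^] q = \<one>} \<le> q ^ 2"
    and W: "subgroup W G" "card W = q ^ 2" "\<not> cyclic_group (subgroup_generated G W)"
  shows "\<not> cyclic_group (G Mod W)"
proof
  assume cyclic: "cyclic_group (G Mod W)"
  have q1: "1 < q" using prime_gt_1_nat[OF q] .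
  have "card (carrier G) \<noteq> 0" using order q1 by (simp add: order_def)
  then have fin: "finite (carrier G)" by (meson card.infinite)
  have finW: "finite W" using finite_subset[OF subgroup.subset[OF W(1)] fin] .
  have "W \<subseteq> {g \<in> carrier G. g [^] q = \<one>}"
  proof
    fix w assume w: "w \<in> W"
    have wG: "w \<in> carrier G" using subgroup.mem_carrier[OF W(1) w] .
    have "w [^] q = \<one>"
    proof (rule ccontr)
      assume "w [^] q \<noteq> \<one>"
      then have "ord w = q ^ 2"
        using ord_eq_prime_power[OF q wG, of 1] exponent[OF wG] by (simp add: power2_eq_square)
      then show False
        using cyclic_group_subgroup_generated_of_ord_eq_card[OF W(1) finW w] W(2,3) by simp
    qed
    then show "w \<in> {g \<in> carrier G. g [^] q = \<one>}" using wG by simp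
  qed
  then have W_eq: "W = {g \<in> carrier G. g [^] q = \<one>}"
    using card_Omega W(2) fin by (intro card_seteq) simp_all
  interpret W: normal W G by (rule subgroup_imp_normal[OF W(1)])
  interpret Mod: group "G Mod W" by (rule W.factorgroup_is_group)
  have "order (G Mod W) dvd q"
  proof (rule Mod.order_dvd_exponent_cyclic[OF cyclic])
    fix xW assume "xW \<in> carrier (G Mod W)"
    then obtain g where g: "g \<in> carrier G" "xW = W #> g" by (auto simp: carrier_FactGroup)
    have "(g [^] q) [^] q = \<one>"
      using exponent[OF g(1)] g(1) by (simp add: nat_pow_pow power2_eq_square)
    then have "g [^] q \<in> W" using g(1) by (subst W_eq) simp
    then show "xW [^]\<^bsub>G Mod W\<^esub> q = \<one>\<^bsub>G Mod W\<^esub>"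
      using W.FactGroup_pow_eq_one_iff[OF g(1)] g(2) by simp
  qed
  moreover have "order (G Mod W) = q ^ 2"
  proof -
    have "card (rcosets W) * q ^ 2 = q ^ 2 * q ^ 2" using lagrange[OF W(1)] W(2) order by simp
    moreover have "q ^ 2 \<noteq> 0" using q1 by simp
    ultimately have "card (rcosets W) = q ^ 2" by (rule mult_right_cancel[THEN iffD1, rotated])
    then show ?thesis by (simp add: order_def FactGroup_def)
  qed
  ultimately have "q ^ 2 \<le> q" using q1 by (simp add: dvd_imp_le)
  then show False using q1 by (simp add: power2_eq_square)
qed

lemma (in comm_group) homocyclic_rank_two_of_exponent:
  fixes q n :: nat
  assumes fin: "finite (carrier G)" and q: "Factorial_Ring.prime q" and "2 \<le> n"
    and order: "order G = q ^ 2 * q ^ n"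
    and a: "a \<in> carrier G" and ord_a: "ord a = q ^ n"
    and exponent: "\<And>x. x \<in> carrier G \<Longrightarrow> x [^] (q ^ n) = \<one>"
    and x0: "x0 \<in> carrier G" "x0 [^] (q ^ (n - 1)) \<notin> carrier (subgroup_generated G {a})"
  shows "n = 2" and "G \<cong> C (q ^ 2) \<times>\<times> C (q ^ n)"
    and "\<And>W. \<lbrakk>subgroup W G; card W = q ^ 2; \<not> cyclic_group (subgroup_generated G W)\<rbrakk>
      \<Longrightarrow> \<not> cyclic_group (G Mod W)"
proof -
  let ?A = "carrier (subgroup_generated G {a})"
  have sub: "subgroup ?A G" by (rule subgroup_subgroup_generated)
  have card_A: "card ?A = q ^ n" using cyclic_order_is_ord[OF a] ord_a by (simp add: order_def)
  have q_pos: "0 < q" using prime_gt_0_nat[OF q] .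
  have "card (rcosets ?A) * q ^ n = q ^ 2 * q ^ n" using lagrange[OF sub] card_A order by simp
  then have index: "card (rcosets ?A) = q ^ 2" using q_pos by simp
  have mem: "x0 [^] (q ^ 2) \<in> ?A"
    using normal.pow_card_rcosets_mem[OF subgroup_imp_normal[OF sub] x0(1)] index by simp
  show n: "n = 2"
  proof (rule ccontr)
    assume "n \<noteq> 2"
    then have "n - 1 = 2 + (n - 3)" using assms(3) by simp
    then have "q ^ (n - 1) = q ^ 2 * q ^ (n - 3)" by (simp only: power_add)
    then have "x0 [^] (q ^ (n - 1)) = (x0 [^] (q ^ 2)) [^] (q ^ (n - 3))"
      using x0(1) by (simp add: nat_pow_pow)
    then show False using subgroup_nat_pow_closed[OF sub mem] x0(2) by simp
  qed
  have dvd: "q ^ Suc 1 dvd ord a" using ord_a n by (simp add: power2_eq_square)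
  have mem': "x0 [^] (q ^ Suc 1) \<in> ?A" using mem by (simp add: power2_eq_square)
  have notin: "x0 [^] (q ^ 1) \<notin> ?A" using x0(2) n by simp
  obtain y where y: "y \<in> carrier G" "ord y = q ^ Suc 1"
      "carrier (subgroup_generated G {y}) \<inter> ?A \<subseteq> {\<one>}"
    by (rule exists_cyclic_complement[OF fin q a x0(1) dvd _ mem' notin])
      (simp add: ord_a exponent[OF x0(1)])
  have ord_y: "ord y = q ^ 2" using y(2) by (simp add: power2_eq_square)
  have ord_prod: "ord y * ord a = order G" using ord_y ord_a order n by simp
  show "G \<cong> C (q ^ 2) \<times>\<times> C (q ^ n)"
    using iso_DirProd_integer_mod_group_ord[OF fin y(1) a ord_prod y(3)] ord_y ord_a by simp
  show "\<not> cyclic_group (G Mod W)"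
    if W: "subgroup W G" "card W = q ^ 2" "\<not> cyclic_group (subgroup_generated G W)" for W
  proof (rule not_cyclic_Mod_of_not_cyclic_subgroup[OF q _ _ _ W])
    show "order G = q ^ 2 * q ^ 2" using order n by simp
    show "g [^] (q ^ 2) = \<one>" if "g \<in> carrier G" for g using exponent[OF that] n by simp
    have "card {g \<in> carrier G. g [^] q = \<one>}
        \<le> card {u \<in> carrier (subgroup_generated G {y}). u [^] q = \<one>} * card {u \<in> ?A. u [^] q = \<one>}"
      by (rule card_pow_eq_one_set_mult_le[OF fin subgroup_subgroup_generated sub y(3)
            set_mult_cyclic_eq_carrier[OF fin y(1) a ord_prod y(3)]])
    also have "\<dots> \<le> q * q"
      using ord_y ord_a n q_pos
      by (intro mult_le_mono card_pow_eq_one_cyclic_le[OF y(1)] card_pow_eq_one_cyclic_le[OF a]) simp_all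
    finally show "card {g \<in> carrier G. g [^] q = \<one>} \<le> q ^ 2" by (simp add: power2_eq_square)
  qed
qed


lemma (in comm_group) iso_DirProd_prime_or_homocyclic:
  fixes q n :: nat
  assumes fin: "finite (carrier G)" and q: "Factorial_Ring.prime q" and n: "2 \<le> n"
    and order: "order G = q ^ 2 * q ^ n"
    and a: "a \<in> carrier G" "ord a = q ^ n"
    and exponent: "\<And>x. x \<in> carrier G \<Longrightarrow> x [^] (q ^ Suc n) = \<one>"
    and x0: "x0 \<in> carrier G"
      "x0 [^] (q ^ (n - 1)) \<notin> {u \<in> carrier (subgroup_generated G {a}). u [^] q = \<one>}"
  shows "G \<cong> C q \<times>\<times> C (q ^ Suc n) \<or>
    n = 2 \<and> G \<cong> C (q ^ 2) \<times>\<times> C (q ^ n) \<and>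
    (\<forall>W. subgroup W G \<and> card W = q ^ 2 \<and> \<not> cyclic_group (subgroup_generated G W)
      \<longrightarrow> \<not> cyclic_group (G Mod W))"
proof (cases "\<forall>x \<in> carrier G. x [^] (q ^ n) = \<one>")
  case True
  then have "(x0 [^] (q ^ (n - 1))) [^] q = \<one>"
    using x0(1) n by (simp add: nat_pow_pow flip: power_Suc2)
  then have "x0 [^] (q ^ (n - 1)) \<notin> carrier (subgroup_generated G {a})" using x0(2) by blast
  moreover have "\<And>x. x \<in> carrier G \<Longrightarrow> x [^] (q ^ n) = \<one>" using True by blast
  ultimately have "n = 2" "G \<cong> C (q ^ 2) \<times>\<times> C (q ^ n)"
    and "\<And>W. \<lbrakk>subgroup W G; card W = q ^ 2; \<not> cyclic_group (subgroup_generated G W)\<rbrakk>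
      \<Longrightarrow> \<not> cyclic_group (G Mod W)"
    using homocyclic_rank_two_of_exponent[OF fin q n order a _ x0(1)] by blast+
  then show ?thesis by blast
next
  case False
  then obtain g where "g \<in> carrier G" "g [^] (q ^ n) \<noteq> \<one>" by blast
  then have "G \<cong> C q \<times>\<times> C (q ^ Suc n)"
    using iso_DirProd_prime_of_exponent[OF fin q _ exponent] order
    by (simp add: power2_eq_square)
  then show ?thesis by blast
qed

theorem lemma6p1:
  fixes D :: "('a, 'b) monoid_scheme" and q m :: nat and A A1 :: "'a set"
  assumes "Factorial_Ring.prime q" and "m \<ge> 3"
    and "comm_group D" and "order D = q ^ (m + 1)"
    and "subgroup A D" and "card A = q ^ (m - 1)"
    and "cyclic_group (subgroup_generated D A)"
    and "\<exists>H. subgroup H D \<and> card H = q ^ (m - 1) \<and> H \<noteq> A"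
    and "subgroup A1 D" and "A1 \<subseteq> A" and "card A1 = q"
    and "D Mod A1 \<cong> DirProd (C q) (C (q ^ (m - 1)))"
  shows "(D \<cong> DirProd (C q) (C (q ^ m)) \<or> D \<cong> DirProd (C (q ^ 2)) (C (q ^ (m - 1))))
    \<and> ((m \<ge> 4 \<or> (\<exists>W. subgroup W D \<and> card W = q ^ 2
                       \<and> \<not> cyclic_group (subgroup_generated D W)
                       \<and> card (W \<inter> A) = q \<and> cyclic_group (D Mod W)))
        \<longrightarrow> D \<cong> DirProd (C q) (C (q ^ m)))"
proof -
  interpret comm_group D by (fact assms(3))
  define n where "n = m - 1"
  have m: "m = Suc n" "2 \<le> n" using assms(2) by (auto simp: n_def)
  have q_pos: "0 < q" using prime_gt_0_nat[OF assms(1)] .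
  have order: "order D = q ^ 2 * q ^ n" using assms(4) m(1) by (simp flip: power_add)
  have "card (carrier D) \<noteq> 0" using order q_pos by (simp add: order_def)
  then have fin: "finite (carrier D)" by (meson card.infinite)
  obtain a where a: "a \<in> carrier D" "carrier (subgroup_generated D {a}) = A"
    by (rule cyclic_subgroup_generatedE[OF assms(5,7)])
  have ord_a: "ord a = q ^ n"
    using cyclic_order_is_ord[OF a(1)] a(2) assms(6) n_def by (simp add: order_def)
  have q_dvd: "q dvd q ^ n" using m(2) by simp
  have A1: "A1 = {u \<in> carrier (subgroup_generated D {a}). u [^]\<^bsub>D\<^esub> q = \<one>\<^bsub>D\<^esub>}"
    using subgroup_of_cyclic_eq_pow_eq_one[OF fin a(1) assms(9)] a(2) assms(10,11) ord_a q_dvd q_pos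
    by simp
  interpret A1: normal A1 D by (rule subgroup_imp_normal[OF assms(9)])
  have quotient: "D Mod A1 \<cong> C q \<times>\<times> C (q ^ n)" using assms(12) n_def by simp
  have "x [^]\<^bsub>D\<^esub> (q ^ Suc n) = \<one>\<^bsub>D\<^esub>" if "x \<in> carrier D" for x
  proof -
    have "x [^]\<^bsub>D\<^esub> (q ^ Suc n) = (x [^]\<^bsub>D\<^esub> (q ^ n)) [^]\<^bsub>D\<^esub> q"
      using that by (simp add: nat_pow_pow mult.commute)
    also have "\<dots> = \<one>\<^bsub>D\<^esub>"
      using A1.pow_mem_of_Mod_iso_DirProd[OF quotient q_dvd that] A1 by blast
    finally show ?thesis .
  qed
  moreover have "0 < q ^ (n - 1)" "q ^ (n - 1) < q ^ n"
    using q_pos m(2) prime_gt_1_nat[OF assms(1)] by (auto intro: power_strict_increasing)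
  then obtain x0 where "x0 \<in> carrier D" "x0 [^]\<^bsub>D\<^esub> (q ^ (n - 1)) \<notin> A1"
    by (rule A1.exists_pow_notin_of_Mod_iso_DirProd[OF quotient])
  ultimately consider "D \<cong> C q \<times>\<times> C (q ^ m)"
    | "m = 3" "D \<cong> C (q ^ 2) \<times>\<times> C (q ^ (m - 1))"
      "\<forall>W. subgroup W D \<and> card W = q ^ 2 \<and> \<not> cyclic_group (subgroup_generated D W)
        \<longrightarrow> \<not> cyclic_group (D Mod W)"
    using iso_DirProd_prime_or_homocyclic[OF fin assms(1) m(2) order a(1) ord_a] A1 m(1) n_def
    by fastforce
  then show ?thesis by cases auto
qed

end
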